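(* Let $q$ be a prime power and $n\ge1$. For $i=1,2$, let $\mathcal{C}_i$ be a $[2n,n,d_i]_q$ linear code with generator matrix $G_i=(I_n\ \ f_i(A_i))$, where $f_i(x)\in\mathbb{F}_q[x]$ and $A_i$ is an $n\times n$ Toeplitz matrix over $\mathbb{F}_q$. Then there exists a $[4n,2n,\min\{d_1,d_2\}]_q$ linear code which is formally self-dual with respect to the Euclidean inner product and (when $q$ is an even power of a prime) with respect to the Hermitian inner product.
   Context: A Toeplitz matrix is a square matrix whose diagonals parallel to the main diagonal each have constant entries. Euclidean inner product $\sum_i x_iy_i$; for $q=p^h$ with $h$ even, Hermitian inner product $\sum_i x_iy_i^{\sqrt q}$. A code is formally self-dual (FSD) with respect to an inner product if it has the same weight distribution as its dual code with respect to that inner product. *)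

theory Defs
  imports "HOL-Computational_Algebra.Polynomial" "HOL-Computational_Algebra.Primes"
    "Jordan_Normal_Form.VS_Connect"
begin

definition is_toeplitz :: "'a mat \<Rightarrow> nat \<Rightarrow> bool" where
  "is_toeplitz A n \<longleftrightarrow> A \<in> carrier_mat n n \<and>
     (\<forall>i j i' j'. i < n \<longrightarrow> j < n \<longrightarrow> i' < n \<longrightarrow> j' < n \<longrightarrow>
        int j - int i = int j' - int i' \<longrightarrow> A $$ (i, j) = A $$ (i', j'))"

definition poly_mat :: "'a::comm_ring_1 poly \<Rightarrow> 'a mat \<Rightarrow> 'a mat" where
  "poly_mat f A = mat (dim_row A) (dim_row A)
     (\<lambda>(i, j). \<Sum>k\<le>degree f. coeff f k * (A ^\<^sub>m k) $$ (i, j))"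

definition id_append :: "nat \<Rightarrow> 'a::{zero,one} mat \<Rightarrow> 'a mat" where
  "id_append n B = mat n (2 * n) (\<lambda>(i, j). if j < n then (if i = j then 1 else 0) else B $$ (i, j - n))"

text \<open>Code generated by a k x N generator matrix G: all u G with u in F^k.\<close>
definition gen_code :: "'a::comm_ring_1 mat \<Rightarrow> 'a vec set" where
  "gen_code G = {G\<^sup>T *\<^sub>v u | u. u \<in> carrier_vec (dim_row G)}"

definition linear_code :: "nat \<Rightarrow> nat \<Rightarrow> 'a::field vec set \<Rightarrow> bool" where
  "linear_code N k C \<longleftrightarrow> subspace class_ring C (module_vec TYPE('a) N) \<and>
     vectorspace.dim class_ring ((module_vec TYPE('a) N)\<lparr>carrier := C\<rparr>) = k"

definition hweight :: "'a::zero vec \<Rightarrow> nat" where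
  "hweight v = card {i. i < dim_vec v \<and> v $ i \<noteq> 0}"

definition min_dist :: "'a::zero vec set \<Rightarrow> nat" where
  "min_dist C = Min {hweight c | c. c \<in> C \<and> c \<noteq> 0\<^sub>v (dim_vec c)}"

definition weight_distribution :: "'a::zero vec set \<Rightarrow> nat \<Rightarrow> nat" where
  "weight_distribution C w = card {c \<in> C. hweight c = w}"

definition euclid_dual :: "nat \<Rightarrow> 'a::comm_ring_1 vec set \<Rightarrow> 'a vec set" where
  "euclid_dual N C = {y \<in> carrier_vec N. \<forall>x\<in>C. (\<Sum>i<N. x $ i * y $ i) = 0}"

text \<open>Hermitian dual, r = sqrt q.\<close>
definition herm_dual :: "nat \<Rightarrow> nat \<Rightarrow> 'a::comm_ring_1 vec set \<Rightarrow> 'a vec set" where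
  "herm_dual r N C = {y \<in> carrier_vec N. \<forall>x\<in>C. (\<Sum>i<N. x $ i * (y $ i) ^ r) = 0}"

definition fsd_euclid :: "nat \<Rightarrow> 'a::comm_ring_1 vec set \<Rightarrow> bool" where
  "fsd_euclid N C \<longleftrightarrow> (\<forall>w. weight_distribution C w = weight_distribution (euclid_dual N C) w)"

definition fsd_herm :: "nat \<Rightarrow> nat \<Rightarrow> 'a::comm_ring_1 vec set \<Rightarrow> bool" where
  "fsd_herm r N C \<longleftrightarrow> (\<forall>w. weight_distribution C w = weight_distribution (herm_dual r N C) w)"

end

theory Submission
  imports Defs "Jordan_Normal_Form.Missing_VectorSpace"
begin

(*
  The code is the direct sum C1 \<oplus> C2. A polynomial in a Toeplitz matrix B is persymmetric
  (symmetric about the anti-diagonal), and for persymmetric B the map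
  (u | u B) \<mapsto> (- B rev(u) | rev(u)) is a weight-preserving bijection from the code with
  generator matrix (I | B) onto its Euclidean dual: up to the sign of its first half, the image
  is the codeword read backwards. So each C_i is formally self-dual. The dual of a direct sum is
  the direct sum of the duals, and weight-preserving bijections add up, so C1 \<oplus> C2 is formally
  self-dual as well; its minimum distance is min d1 d2 and its generator matrix is diag(G1, G2).
  For q = r\<^sup>2 the coordinatewise Frobenius map x \<mapsto> x ^ r is a weight-preserving bijection
  from the Euclidean dual onto the Hermitian dual.
*)

section \<open>Hamming weight\<close>

lemma hweight_le_dim_vec: "hweight v \<le> dim_vec v"
  unfolding hweight_def by (rule card_mono[of "{..<dim_vec v}", simplified]) auto

lemma hweight_eq_0_iff: "hweight v = 0 \<longleftrightarrow> v = 0\<^sub>v (dim_vec v)"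
  unfolding hweight_def by (auto simp: vec_eq_iff)

lemma hweight_zero_vec [simp]: "hweight (0\<^sub>v n) = 0"
  by (simp add: hweight_eq_0_iff)

lemma hweight_append: "hweight (x @\<^sub>v y) = hweight x + hweight y"
proof -
  let ?supp = "\<lambda>v. {i. i < dim_vec v \<and> v $ i \<noteq> 0}"
  have "?supp (x @\<^sub>v y) = ?supp x \<union> (+) (dim_vec x) ` ?supp y" (is "?L = ?R")
  proof
    show "?L \<subseteq> ?R"
    proof
      fix i assume "i \<in> ?L"
      then show "i \<in> ?R"
        by (cases "i < dim_vec x") (auto simp: image_iff intro!: exI[of _ "i - dim_vec x"])
    qed
  qed auto
  moreover have "?supp x \<inter> (+) (dim_vec x) ` ?supp y = {}" by auto
  ultimately show ?thesis
    unfolding hweight_def by (simp add: card_Un_disjoint card_image)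
qed

lemma hweight_map_vec:
  assumes "\<And>x. f x = 0 \<longleftrightarrow> x = 0"
  shows "hweight (map_vec f v) = hweight v"
proof -
  have "i < dim_vec v \<and> map_vec f v $ i \<noteq> 0 \<longleftrightarrow> i < dim_vec v \<and> v $ i \<noteq> 0" for i
    using assms[of "v $ i"] by auto
  then show ?thesis by (simp add: hweight_def)
qed

lemma hweight_uminus [simp]: "hweight (- v) = hweight (v :: 'a::ab_group_add vec)"
proof -
  have "{i. i < dim_vec (- v) \<and> (- v) $ i \<noteq> 0} = {i. i < dim_vec v \<and> v $ i \<noteq> 0}"
    by auto
  then show ?thesis by (simp add: hweight_def)
qed

definition rev_vec :: "'a vec \<Rightarrow> 'a vec" where
  "rev_vec v = vec (dim_vec v) (\<lambda>i. v $ (dim_vec v - 1 - i))"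

lemma dim_rev_vec [simp]: "dim_vec (rev_vec v) = dim_vec v"
  and index_rev_vec [simp]: "i < dim_vec v \<Longrightarrow> rev_vec v $ i = v $ (dim_vec v - 1 - i)"
  by (simp_all add: rev_vec_def)

lemma rev_vec_carrier_vec_iff [simp]: "rev_vec v \<in> carrier_vec n \<longleftrightarrow> v \<in> carrier_vec n"
proof
  show "v \<in> carrier_vec n" if "rev_vec v \<in> carrier_vec n"
    using carrier_vecD[OF that] by (intro carrier_vecI) simp
  show "rev_vec v \<in> carrier_vec n" if "v \<in> carrier_vec n"
    using carrier_vecD[OF that] by (intro carrier_vecI) simp
qed

lemma rev_vec_rev_vec [simp]: "rev_vec (rev_vec v) = v"
  by (simp add: vec_eq_iff)

lemma hweight_rev_vec [simp]: "hweight (rev_vec v) = hweight v"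
proof -
  let ?d = "dim_vec v"
  have "bij_betw (\<lambda>i. ?d - 1 - i) {i. i < ?d \<and> v $ i \<noteq> 0} {i. i < ?d \<and> rev_vec v $ i \<noteq> 0}"
    by (rule bij_betwI[where g = "\<lambda>i. ?d - 1 - i"]) auto
  then show ?thesis unfolding hweight_def by (simp add: bij_betw_same_card)
qed

section \<open>Weight-preserving bijections and direct sums\<close>

definition weight_equivalent :: "'a::zero vec set \<Rightarrow> 'a vec set \<Rightarrow> bool" where
  "weight_equivalent X Y \<longleftrightarrow> (\<exists>\<phi>. bij_betw \<phi> X Y \<and> (\<forall>x\<in>X. hweight (\<phi> x) = hweight x))"

lemma weight_distribution_eq_if_weight_equivalent:
  assumes "weight_equivalent X Y"
  shows "weight_distribution X = weight_distribution Y"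
proof
  fix w
  obtain \<phi> where bij: "bij_betw \<phi> X Y" and weight: "\<forall>x\<in>X. hweight (\<phi> x) = hweight x"
    using assms unfolding weight_equivalent_def by blast
  have "bij_betw \<phi> {c \<in> X. hweight c = w} {c \<in> Y. hweight c = w}"
    by (rule bij_betw_subset[OF bij]) (use bij weight in \<open>auto simp: bij_betw_def\<close>)
  then show "weight_distribution X w = weight_distribution Y w"
    unfolding weight_distribution_def by (rule bij_betw_same_card)
qed

lemma weight_equivalent_imageI:
  assumes f: "inj_on f A" and g: "inj_on g A"
    and weight: "\<And>a. a \<in> A \<Longrightarrow> hweight (g a) = hweight (f a)"
  shows "weight_equivalent (f ` A) (g ` A)"
  unfolding weight_equivalent_def
proof (intro exI conjI ballI)
  show "bij_betw (g \<circ> the_inv_into A f) (f ` A) (g ` A)"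
    using bij_betw_the_inv_into[OF inj_on_imp_bij_betw[OF f]] inj_on_imp_bij_betw[OF g]
    by (rule bij_betw_trans)
  fix x assume "x \<in> f ` A"
  then show "hweight ((g \<circ> the_inv_into A f) x) = hweight x"
    using weight by (auto simp: the_inv_into_f_f[OF f])
qed

definition direct_sum :: "'a vec set \<Rightarrow> 'a vec set \<Rightarrow> 'a vec set" where
  "direct_sum X Y = (\<lambda>(x, y). x @\<^sub>v y) ` (X \<times> Y)"

lemma append_vec_mem_direct_sum:
  assumes "x \<in> X" "y \<in> Y"
  shows "x @\<^sub>v y \<in> direct_sum X Y"
  unfolding direct_sum_def using assms by (intro image_eqI[of _ _ "(x, y)"]) simp_all

lemma direct_sumE:
  assumes "z \<in> direct_sum X Y"
  obtains x y where "x \<in> X" "y \<in> Y" "z = x @\<^sub>v y"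
proof -
  from assms obtain p where z: "z = (\<lambda>(x, y). x @\<^sub>v y) p" and p: "p \<in> X \<times> Y"
    unfolding direct_sum_def by (rule imageE)
  have "fst p \<in> X" "snd p \<in> Y" using p by (simp_all add: mem_Times_iff)
  moreover have "z = fst p @\<^sub>v snd p" using z by (simp add: case_prod_beta)
  ultimately show thesis by (rule that)
qed

lemma direct_sum_subset_carrier_vec:
  assumes "X \<subseteq> carrier_vec a" and "Y \<subseteq> carrier_vec b"
  shows "direct_sum X Y \<subseteq> carrier_vec (a + b)"
proof
  fix z assume "z \<in> direct_sum X Y"
  then obtain x y where "x \<in> X" "y \<in> Y" "z = x @\<^sub>v y" by (rule direct_sumE)
  then show "z \<in> carrier_vec (a + b)" using assms by auto
qed

lemma inj_on_append_vec_pair: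
  assumes f: "inj_on f A" and g: "inj_on g B" and "f ` A \<subseteq> carrier_vec n"
  shows "inj_on (\<lambda>(x, y). f x @\<^sub>v g y) (A \<times> B)"
proof (rule inj_onI, clarify)
  fix x y x' y' assume "x \<in> A" "y \<in> B" "x' \<in> A" "y' \<in> B" and eq: "f x @\<^sub>v g y = f x' @\<^sub>v g y'"
  moreover have "f x \<in> carrier_vec n" "f x' \<in> carrier_vec n"
    using assms(3) \<open>x \<in> A\<close> \<open>x' \<in> A\<close> by auto
  ultimately have "f x = f x'" "g y = g y'"
    using append_vec_eq by blast+
  then show "x = x' \<and> y = y'"
    using inj_onD[OF f] inj_onD[OF g] \<open>x \<in> A\<close> \<open>y \<in> B\<close> \<open>x' \<in> A\<close> \<open>y' \<in> B\<close> by blast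
qed

lemma direct_sum_image: "direct_sum (f ` A) (g ` B) = (\<lambda>(a, b). f a @\<^sub>v g b) ` (A \<times> B)"
proof -
  have "(\<lambda>(x, y). x @\<^sub>v y) \<circ> map_prod f g = (\<lambda>(a, b). f a @\<^sub>v g b)" by auto
  then show ?thesis
    unfolding direct_sum_def map_prod_surj_on[OF refl refl, symmetric] image_comp by simp
qed

lemma carrier_vec_add_eq_direct_sum: "carrier_vec (n + m) = direct_sum (carrier_vec n) (carrier_vec m)"
proof (intro equalityI subsetI)
  fix v :: "'a vec" assume "v \<in> carrier_vec (n + m)"
  then have "v = vec_first v n @\<^sub>v vec_last v m" by simp
  also have "\<dots> \<in> direct_sum (carrier_vec n) (carrier_vec m)"
    by (intro append_vec_mem_direct_sum) simp_all
  finally show "v \<in> direct_sum (carrier_vec n) (carrier_vec m)" .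
qed (auto elim: direct_sumE)

lemma weight_equivalent_direct_sum:
  assumes X: "X \<subseteq> carrier_vec n" and X': "X' \<subseteq> carrier_vec n"
    and "weight_equivalent X X'" and "weight_equivalent Y Y'"
  shows "weight_equivalent (direct_sum X Y) (direct_sum X' Y')"
proof -
  obtain \<phi> where \<phi>: "bij_betw \<phi> X X'" and w\<phi>: "\<forall>x\<in>X. hweight (\<phi> x) = hweight x"
    using assms(3) unfolding weight_equivalent_def by blast
  obtain \<psi> where \<psi>: "bij_betw \<psi> Y Y'" and w\<psi>: "\<forall>y\<in>Y. hweight (\<psi> y) = hweight y"
    using assms(4) unfolding weight_equivalent_def by blast
  have image: "direct_sum X' Y' = (\<lambda>(x, y). \<phi> x @\<^sub>v \<psi> y) ` (X \<times> Y)"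
    using \<phi> \<psi> by (simp add: bij_betw_def direct_sum_image[symmetric])
  have "weight_equivalent ((\<lambda>(x, y). x @\<^sub>v y) ` (X \<times> Y)) ((\<lambda>(x, y). \<phi> x @\<^sub>v \<psi> y) ` (X \<times> Y))"
  proof (rule weight_equivalent_imageI)
    show "inj_on (\<lambda>(x, y). x @\<^sub>v y) (X \<times> Y)"
      using inj_on_append_vec_pair[of "\<lambda>x. x" X "\<lambda>y. y" Y n] X by simp
    show "inj_on (\<lambda>(x, y). \<phi> x @\<^sub>v \<psi> y) (X \<times> Y)"
      using inj_on_append_vec_pair[of \<phi> X \<psi> Y n] \<phi> \<psi> X' by (simp add: bij_betw_def)
    fix p assume "p \<in> X \<times> Y"
    then show "hweight ((\<lambda>(x, y). \<phi> x @\<^sub>v \<psi> y) p) = hweight ((\<lambda>(x, y). x @\<^sub>v y) p)"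
      using w\<phi> w\<psi> by (auto simp: hweight_append)
  qed
  then show ?thesis
    unfolding image unfolding direct_sum_def .
qed

lemma euclid_dual_eq: "euclid_dual N C = {y \<in> carrier_vec N. \<forall>x\<in>C. x \<bullet> y = 0}"
  unfolding euclid_dual_def scalar_prod_def by (auto simp: atLeast0LessThan)

lemma euclid_dual_direct_sum:
  fixes X Y :: "'a::comm_ring_1 vec set"
  assumes X: "X \<subseteq> carrier_vec a" and Y: "Y \<subseteq> carrier_vec b"
    and X0: "0\<^sub>v a \<in> X" and Y0: "0\<^sub>v b \<in> Y"
  shows "euclid_dual (a + b) (direct_sum X Y) = direct_sum (euclid_dual a X) (euclid_dual b Y)"
proof -
  have pairing: "(x @\<^sub>v y) \<bullet> (s @\<^sub>v t) = x \<bullet> s + y \<bullet> t"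
    if "x \<in> carrier_vec a" "y \<in> carrier_vec b" "s \<in> carrier_vec a" "t \<in> carrier_vec b"
    for x y s t :: "'a vec"
    using that by (rule scalar_prod_append)
  have mem: "s @\<^sub>v t \<in> euclid_dual (a + b) (direct_sum X Y) \<longleftrightarrow>
      s \<in> euclid_dual a X \<and> t \<in> euclid_dual b Y"
    if s: "s \<in> carrier_vec a" and t: "t \<in> carrier_vec b" for s t
  proof
    assume st: "s @\<^sub>v t \<in> euclid_dual (a + b) (direct_sum X Y)"
    have "x \<bullet> s = 0" if "x \<in> X" for x
      using st append_vec_mem_direct_sum[OF that Y0] pairing[of x "0\<^sub>v b" s t] that X s t
      by (auto simp: euclid_dual_eq)
    moreover have "y \<bullet> t = 0" if "y \<in> Y" for y
      using st append_vec_mem_direct_sum[OF X0 that] pairing[of "0\<^sub>v a" y s t] that Y s t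
      by (auto simp: euclid_dual_eq)
    ultimately show "s \<in> euclid_dual a X \<and> t \<in> euclid_dual b Y"
      using s t by (simp add: euclid_dual_eq)
  next
    assume dual: "s \<in> euclid_dual a X \<and> t \<in> euclid_dual b Y"
    have "c \<bullet> (s @\<^sub>v t) = 0" if c: "c \<in> direct_sum X Y" for c
    proof -
      obtain x y where xy: "x \<in> X" "y \<in> Y" "c = x @\<^sub>v y"
        using c by (rule direct_sumE)
      then have "c \<bullet> (s @\<^sub>v t) = x \<bullet> s + y \<bullet> t"
        using pairing[of x y s t] X Y s t by blast
      also have "\<dots> = 0"
        using dual xy by (simp add: euclid_dual_eq)
      finally show ?thesis .
    qed
    then show "s @\<^sub>v t \<in> euclid_dual (a + b) (direct_sum X Y)"
      using s t by (simp add: euclid_dual_eq)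
  qed
  show ?thesis
  proof (intro equalityI subsetI)
    fix z assume z: "z \<in> euclid_dual (a + b) (direct_sum X Y)"
    then have "z \<in> carrier_vec (a + b)" by (simp add: euclid_dual_eq)
    then have split: "z = vec_first z a @\<^sub>v vec_last z b" by simp
    then have "vec_first z a \<in> euclid_dual a X" "vec_last z b \<in> euclid_dual b Y"
      using mem[of "vec_first z a" "vec_last z b"] z by simp_all
    then show "z \<in> direct_sum (euclid_dual a X) (euclid_dual b Y)"
      by (subst split) (rule append_vec_mem_direct_sum)
  next
    fix z assume "z \<in> direct_sum (euclid_dual a X) (euclid_dual b Y)"
    then obtain s t where "s \<in> euclid_dual a X" "t \<in> euclid_dual b Y" "z = s @\<^sub>v t"
      by (rule direct_sumE)
    then show "z \<in> euclid_dual (a + b) (direct_sum X Y)"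
      using mem by (simp add: euclid_dual_eq)
  qed
qed

lemma fsd_euclid_direct_sum:
  fixes X Y :: "'a::comm_ring_1 vec set"
  assumes X: "X \<subseteq> carrier_vec a" and Y: "Y \<subseteq> carrier_vec b"
    and X0: "0\<^sub>v a \<in> X" and Y0: "0\<^sub>v b \<in> Y"
    and "weight_equivalent X (euclid_dual a X)" and "weight_equivalent Y (euclid_dual b Y)"
  shows "fsd_euclid (a + b) (direct_sum X Y)"
proof -
  have "euclid_dual a X \<subseteq> carrier_vec a"
    by (auto simp: euclid_dual_eq)
  with X have "weight_equivalent (direct_sum X Y) (direct_sum (euclid_dual a X) (euclid_dual b Y))"
    using assms(5,6) by (rule weight_equivalent_direct_sum)
  then show ?thesis
    unfolding fsd_euclid_def euclid_dual_direct_sum[OF X Y X0 Y0]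
    by (simp add: weight_distribution_eq_if_weight_equivalent)
qed

section \<open>Minimum distance of a direct sum\<close>

definition nonzero_weights :: "'a::zero vec set \<Rightarrow> nat set" where
  "nonzero_weights C = {hweight c | c. c \<in> C \<and> hweight c \<noteq> 0}"

lemma min_dist_eq_Min_nonzero_weights: "min_dist C = Min (nonzero_weights C)"
  by (simp add: min_dist_def nonzero_weights_def hweight_eq_0_iff)

lemma hweight_mem_nonzero_weights: "c \<in> C \<Longrightarrow> hweight c \<noteq> 0 \<Longrightarrow> hweight c \<in> nonzero_weights C"
  unfolding nonzero_weights_def by blast

lemma finite_nonzero_weights:
  assumes "C \<subseteq> carrier_vec N"
  shows "finite (nonzero_weights C)"
proof (rule finite_subset)
  show "nonzero_weights C \<subseteq> {..N}"
    unfolding nonzero_weights_def using assms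
    by (auto simp: subset_iff) (metis carrier_vecD hweight_le_dim_vec)
qed simp

lemma nonzero_weights_nonempty:
  assumes "C \<subseteq> carrier_vec N" "c \<in> C" "c \<noteq> 0\<^sub>v N"
  shows "nonzero_weights C \<noteq> {}"
  using assms carrier_vecD[OF subsetD[OF assms(1,2)]]
  by (auto simp: nonzero_weights_def hweight_eq_0_iff)

lemma nonzero_weights_direct_sum_superset:
  assumes "0\<^sub>v a \<in> X" "0\<^sub>v b \<in> Y"
  shows "nonzero_weights X \<union> nonzero_weights Y \<subseteq> nonzero_weights (direct_sum X Y)"
proof (rule subsetI, elim UnE)
  fix w assume "w \<in> nonzero_weights X"
  then obtain x where "x \<in> X" "hweight x \<noteq> 0" "w = hweight x"
    unfolding nonzero_weights_def by blast
  then show "w \<in> nonzero_weights (direct_sum X Y)"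
    using hweight_mem_nonzero_weights[OF append_vec_mem_direct_sum[OF \<open>x \<in> X\<close> assms(2)]]
    by (simp add: hweight_append)
next
  fix w assume "w \<in> nonzero_weights Y"
  then obtain y where "y \<in> Y" "hweight y \<noteq> 0" "w = hweight y"
    unfolding nonzero_weights_def by blast
  then show "w \<in> nonzero_weights (direct_sum X Y)"
    using hweight_mem_nonzero_weights[OF append_vec_mem_direct_sum[OF assms(1) \<open>y \<in> Y\<close>]]
    by (simp add: hweight_append)
qed

lemma nonzero_weights_direct_sum_dominated:
  assumes "w \<in> nonzero_weights (direct_sum X Y)"
  shows "\<exists>v \<in> nonzero_weights X \<union> nonzero_weights Y. v \<le> w"
proof -
  obtain c where c: "c \<in> direct_sum X Y" "hweight c \<noteq> 0" "w = hweight c"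
    using assms unfolding nonzero_weights_def by blast
  from c(1) obtain x y where "x \<in> X" "y \<in> Y" "c = x @\<^sub>v y"
    by (rule direct_sumE)
  with c have w: "w = hweight x + hweight y" "w \<noteq> 0"
    by (simp_all add: hweight_append)
  show ?thesis
  proof (cases "hweight x = 0")
    case True
    then have "hweight y \<in> nonzero_weights Y"
      using \<open>y \<in> Y\<close> w by (simp add: hweight_mem_nonzero_weights)
    then show ?thesis using w by (intro bexI[of _ "hweight y"]) simp_all
  next
    case False
    then have "hweight x \<in> nonzero_weights X"
      using \<open>x \<in> X\<close> by (simp add: hweight_mem_nonzero_weights)
    then show ?thesis using w by (intro bexI[of _ "hweight x"]) simp_all
  qed
qed

lemma Min_subset_eq:
  fixes A B :: "'a::linorder set"
  assumes "finite A" "B \<subseteq> A" "B \<noteq> {}" and dominating: "\<And>a. a \<in> A \<Longrightarrow> \<exists>b\<in>B. b \<le> a"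
  shows "Min B = Min A"
proof (rule antisym)
  have "A \<noteq> {}" "finite B" using assms finite_subset by blast+
  then obtain b where "b \<in> B" "b \<le> Min A" using dominating[OF Min_in[OF \<open>finite A\<close>]] by blast
  then show "Min B \<le> Min A" using \<open>finite B\<close> by (meson Min_le order_trans)
  show "Min A \<le> Min B" using assms by (intro Min_antimono)
qed

lemma min_dist_direct_sum:
  assumes X: "X \<subseteq> carrier_vec a" and Y: "Y \<subseteq> carrier_vec b"
    and X0: "0\<^sub>v a \<in> X" and Y0: "0\<^sub>v b \<in> Y"
    and "\<exists>x\<in>X. x \<noteq> 0\<^sub>v a" and "\<exists>y\<in>Y. y \<noteq> 0\<^sub>v b"
  shows "min_dist (direct_sum X Y) = min (min_dist X) (min_dist Y)"
proof -
  have nonempty: "nonzero_weights X \<noteq> {}" "nonzero_weights Y \<noteq> {}"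
    using nonzero_weights_nonempty[OF X] nonzero_weights_nonempty[OF Y] assms(5,6) by blast+
  have "Min (nonzero_weights X \<union> nonzero_weights Y) = Min (nonzero_weights (direct_sum X Y))"
    using finite_nonzero_weights[OF direct_sum_subset_carrier_vec[OF X Y]]
      nonzero_weights_direct_sum_superset[OF X0 Y0] nonempty nonzero_weights_direct_sum_dominated
    by (intro Min_subset_eq) auto
  moreover have "Min (nonzero_weights X \<union> nonzero_weights Y) = min (Min (nonzero_weights X)) (Min (nonzero_weights Y))"
    using finite_nonzero_weights[OF X] finite_nonzero_weights[OF Y] nonempty by (intro Min_Un)
  ultimately show ?thesis
    unfolding min_dist_eq_Min_nonzero_weights by simp
qed

section \<open>Codes given by generator matrices\<close>

lemma gen_code_eq_image: "gen_code G = (\<lambda>u. G\<^sup>T *\<^sub>v u) ` carrier_vec (dim_row G)"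
  by (auto simp: gen_code_def)

lemma linear_code_gen_code:
  fixes G :: "'a::field mat"
  assumes G: "G \<in> carrier_mat k N" and inj: "inj_on (\<lambda>u. G\<^sup>T *\<^sub>v u) (carrier_vec k)"
  shows "linear_code N k (gen_code G)"
proof -
  interpret V: vec_space "TYPE('a)" k .
  interpret W: vec_space "TYPE('a)" N .
  interpret L: linear_map class_ring "module_vec TYPE('a) k" "module_vec TYPE('a) N" "\<lambda>u. G\<^sup>T *\<^sub>v u"
    by unfold_locales
      (use G in \<open>auto simp: LinearCombinations.module_hom_def module_vec_simps mult_add_distrib_mat_vec mult_mat_vec\<close>)
  have image: "L.imT = gen_code G"
    using G by (auto simp: L.im_def gen_code_def module_vec_simps)
  have "vectorspace.dim class_ring (V.vs L.kerT) = 0"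
    by (rule L.inj_imp_dim_ker0) (use inj in \<open>simp add: module_vec_simps\<close>)
  then have "vectorspace.dim class_ring (W.vs L.imT) = k"
    using L.rank_nullity_main(1) V.dim_is_n by simp
  then show ?thesis
    using L.imT_is_subspace unfolding linear_code_def image by simp
qed

lemma block_diag_transpose_mult_append_vec:
  assumes "G1 \<in> carrier_mat k1 n1" "G2 \<in> carrier_mat k2 n2"
    and "u1 \<in> carrier_vec k1" "u2 \<in> carrier_vec k2"
  shows "(four_block_mat G1 (0\<^sub>m k1 n2) (0\<^sub>m k2 n1) G2)\<^sup>T *\<^sub>v (u1 @\<^sub>v u2) = (G1\<^sup>T *\<^sub>v u1) @\<^sub>v (G2\<^sup>T *\<^sub>v u2)"
proof -
  have transpose: "(four_block_mat G1 (0\<^sub>m k1 n2) (0\<^sub>m k2 n1) G2)\<^sup>T =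
      four_block_mat G1\<^sup>T (0\<^sub>m n1 k2) (0\<^sub>m n2 k1) G2\<^sup>T"
    using assms by (simp add: transpose_four_block_mat[of G1 k1 n1 "0\<^sub>m k1 n2" n2 "0\<^sub>m k2 n1" k2 G2])
  show ?thesis
    unfolding transpose using assms
    by (subst four_block_mat_mult_vec[of "G1\<^sup>T" n1 k1 "0\<^sub>m n1 k2" k2 "0\<^sub>m n2 k1" n2 "G2\<^sup>T" u1 u2]) auto
qed

lemma linear_code_direct_sum_gen_code:
  fixes G1 G2 :: "'a::field mat"
  assumes G1: "G1 \<in> carrier_mat k1 n1" and G2: "G2 \<in> carrier_mat k2 n2"
    and inj1: "inj_on (\<lambda>u. G1\<^sup>T *\<^sub>v u) (carrier_vec k1)"
    and inj2: "inj_on (\<lambda>u. G2\<^sup>T *\<^sub>v u) (carrier_vec k2)"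
  shows "linear_code (n1 + n2) (k1 + k2) (direct_sum (gen_code G1) (gen_code G2))"
proof -
  let ?G = "four_block_mat G1 (0\<^sub>m k1 n2) (0\<^sub>m k2 n1) G2"
  let ?enc = "\<lambda>(u1, u2). (G1\<^sup>T *\<^sub>v u1) @\<^sub>v (G2\<^sup>T *\<^sub>v u2)"
  let ?U = "carrier_vec k1 \<times> carrier_vec k2"
  have G: "?G \<in> carrier_mat (k1 + k2) (n1 + n2)"
    using G1 G2 by simp
  have comp: "((\<lambda>u. ?G\<^sup>T *\<^sub>v u) \<circ> (\<lambda>(u1, u2). u1 @\<^sub>v u2)) p = ?enc p" if "p \<in> ?U" for p
    using that G1 G2 block_diag_transpose_mult_append_vec by auto
  have "gen_code ?G = ((\<lambda>u. ?G\<^sup>T *\<^sub>v u) \<circ> (\<lambda>(u1, u2). u1 @\<^sub>v u2)) ` ?U"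
    using G G1 G2 by (simp add: gen_code_eq_image carrier_vec_add_eq_direct_sum direct_sum_def image_comp)
  also have "\<dots> = ?enc ` ?U"
    using comp by (rule image_cong[OF refl])
  also have "\<dots> = direct_sum (gen_code G1) (gen_code G2)"
    using G1 G2 by (simp add: gen_code_eq_image direct_sum_image)
  finally have code: "gen_code ?G = direct_sum (gen_code G1) (gen_code G2)" .
  have "inj_on ?enc ?U"
    using G1 by (intro inj_on_append_vec_pair[OF inj1 inj2, of n1]) auto
  moreover have "inj_on ((\<lambda>u. ?G\<^sup>T *\<^sub>v u) \<circ> (\<lambda>(u1, u2). u1 @\<^sub>v u2)) ?U \<longleftrightarrow> inj_on ?enc ?U"
    using comp by (rule inj_on_cong)
  ultimately have "inj_on ((\<lambda>u. ?G\<^sup>T *\<^sub>v u) \<circ> (\<lambda>(u1, u2). u1 @\<^sub>v u2)) ?U"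
    by blast
  then have "inj_on (\<lambda>u. ?G\<^sup>T *\<^sub>v u) (carrier_vec (k1 + k2))"
    unfolding carrier_vec_add_eq_direct_sum direct_sum_def by (rule inj_on_imageI)
  then show ?thesis
    using linear_code_gen_code[OF G] code by simp
qed

lemma gen_code_subset_carrier_vec: "gen_code G \<subseteq> carrier_vec (dim_col G)"
  by (auto simp: gen_code_def intro!: carrier_vecI)

lemma zero_vec_mem_gen_code: "0\<^sub>v (dim_col G) \<in> gen_code (G :: 'a::comm_ring_1 mat)"
  unfolding gen_code_eq_image
proof (rule image_eqI)
  show "0\<^sub>v (dim_col G) = G\<^sup>T *\<^sub>v 0\<^sub>v (dim_row G)"
    by (intro eq_vecI) auto
qed simp

lemma id_append_carrier_mat [simp]: "id_append n B \<in> carrier_mat n (2 * n)"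
  by (simp add: id_append_def)

lemma dim_id_append [simp]: "dim_row (id_append n B) = n" "dim_col (id_append n B) = 2 * n"
  by (simp_all add: id_append_def)

lemma poly_mat_carrier_mat:
  assumes "A \<in> carrier_mat n n"
  shows "poly_mat f A \<in> carrier_mat n n"
  using carrier_matD(1)[OF assms] by (simp add: poly_mat_def)

lemma id_append_transpose_mult_vec:
  fixes B :: "'a::comm_ring_1 mat"
  assumes B: "B \<in> carrier_mat n n" and u: "u \<in> carrier_vec n"
  shows "(id_append n B)\<^sup>T *\<^sub>v u = u @\<^sub>v (B\<^sup>T *\<^sub>v u)"
proof (rule eq_vecI)
  fix i assume "i < dim_vec (u @\<^sub>v (B\<^sup>T *\<^sub>v u))"
  then have i: "i < 2 * n" using B u by simp
  show "((id_append n B)\<^sup>T *\<^sub>v u) $ i = (u @\<^sub>v (B\<^sup>T *\<^sub>v u)) $ i"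
  proof (cases "i < n")
    case True
    then have "((id_append n B)\<^sup>T *\<^sub>v u) $ i = (\<Sum>j\<in>{0..<n}. (if j = i then 1 else 0) * u $ j)"
      using i u by (auto simp: id_append_def scalar_prod_def intro: sum.cong)
    also have "\<dots> = u $ i"
      using True by (simp add: if_distrib[of "\<lambda>x. x * _"] cong: if_cong)
    finally show ?thesis using True u by simp
  next
    case False
    then show ?thesis
      using i B u by (auto simp: id_append_def scalar_prod_def mult.commute intro: sum.cong)
  qed
qed (use B u in \<open>simp add: id_append_def\<close>)

lemma gen_code_id_append:
  fixes B :: "'a::comm_ring_1 mat"
  shows "B \<in> carrier_mat n n \<Longrightarrow> gen_code (id_append n B) = (\<lambda>u. u @\<^sub>v (B\<^sup>T *\<^sub>v u)) ` carrier_vec n"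
  by (simp add: gen_code_eq_image id_append_transpose_mult_vec cong: image_cong)

lemma inj_on_id_append_transpose_mult_vec:
  fixes B :: "'a::comm_ring_1 mat"
  shows "B \<in> carrier_mat n n \<Longrightarrow> inj_on (\<lambda>u. (id_append n B)\<^sup>T *\<^sub>v u) (carrier_vec n)"
  by (auto simp: inj_on_def id_append_transpose_mult_vec)

lemma gen_code_id_append_nonzero:
  fixes B :: "'a::comm_ring_1 mat"
  assumes "B \<in> carrier_mat n n" and "n \<ge> 1"
  shows "\<exists>c\<in>gen_code (id_append n B). c \<noteq> 0\<^sub>v (2 * n)"
proof
  let ?c = "unit_vec n 0 @\<^sub>v (B\<^sup>T *\<^sub>v unit_vec n 0)"
  show "?c \<in> gen_code (id_append n B)"
    using assms by (simp add: gen_code_id_append)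
  have "?c $ 0 = 1" using assms by simp
  show "?c \<noteq> 0\<^sub>v (2 * n)"
  proof
    assume "?c = 0\<^sub>v (2 * n)"
    then have "?c $ 0 = 0" using assms by simp
    then show False using \<open>?c $ 0 = 1\<close> by simp
  qed
qed

lemma zero_vec_if_scalar_prod_eq_0:
  fixes w :: "'a::semiring_1 vec"
  assumes "w \<in> carrier_vec n" and "\<And>u. u \<in> carrier_vec n \<Longrightarrow> u \<bullet> w = 0"
  shows "w = 0\<^sub>v n"
proof (rule eq_vecI)
  fix i assume "i < dim_vec (0\<^sub>v n)"
  then have "i < n" by simp
  then have "unit_vec n i \<bullet> w = w $ i" using assms(1) by simp
  then show "w $ i = 0\<^sub>v n $ i" using assms(2)[of "unit_vec n i"] \<open>i < n\<close> by simp
qed (use assms(1) in simp)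

lemma append_vec_mem_euclid_dual_id_append_iff:
  fixes B :: "'a::comm_ring_1 mat"
  assumes B: "B \<in> carrier_mat n n" and s: "s \<in> carrier_vec n" and t: "t \<in> carrier_vec n"
  shows "s @\<^sub>v t \<in> euclid_dual (2 * n) (gen_code (id_append n B)) \<longleftrightarrow> s = - (B *\<^sub>v t)"
proof -
  have pairing: "(u @\<^sub>v (B\<^sup>T *\<^sub>v u)) \<bullet> (s @\<^sub>v t) = u \<bullet> (s + B *\<^sub>v t)" if "u \<in> carrier_vec n" for u
    using that s t B
    by (simp add: scalar_prod_append[of _ n _ n] scalar_prod_add_distrib[of _ n]
        transpose_vec_mult_scalar[of B n n t u])
  have "s @\<^sub>v t \<in> euclid_dual (2 * n) (gen_code (id_append n B)) \<longleftrightarrow>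
      (\<forall>u\<in>carrier_vec n. u \<bullet> (s + B *\<^sub>v t) = 0)"
    using s t B by (auto simp: euclid_dual_eq gen_code_id_append pairing mult_2)
  also have "\<dots> \<longleftrightarrow> s + B *\<^sub>v t = 0\<^sub>v n"
    using s t B zero_vec_if_scalar_prod_eq_0[of "s + B *\<^sub>v t" n] by auto
  also have "\<dots> \<longleftrightarrow> s = - (B *\<^sub>v t)"
    using s t B by (auto simp: vec_eq_iff eq_neg_iff_add_eq_0)
  finally show ?thesis .
qed

lemma euclid_dual_gen_code_id_append:
  fixes B :: "'a::comm_ring_1 mat"
  assumes B: "B \<in> carrier_mat n n"
  shows "euclid_dual (2 * n) (gen_code (id_append n B)) = (\<lambda>v. (- (B *\<^sub>v v)) @\<^sub>v v) ` carrier_vec n"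
proof -
  note mem = append_vec_mem_euclid_dual_id_append_iff[OF B]
  show ?thesis
  proof (intro equalityI subsetI)
    fix y assume y: "y \<in> euclid_dual (2 * n) (gen_code (id_append n B))"
    then have "y \<in> carrier_vec (n + n)" by (simp add: euclid_dual_eq mult_2)
    then have split: "y = vec_first y n @\<^sub>v vec_last y n" by simp
    then have "vec_first y n = - (B *\<^sub>v vec_last y n)"
      using mem[of "vec_first y n" "vec_last y n"] y by simp
    then show "y \<in> (\<lambda>v. (- (B *\<^sub>v v)) @\<^sub>v v) ` carrier_vec n"
      using split by (intro image_eqI[of _ _ "vec_last y n"]) simp_all
  next
    fix y assume "y \<in> (\<lambda>v. (- (B *\<^sub>v v)) @\<^sub>v v) ` carrier_vec n"
    then obtain t where "t \<in> carrier_vec n" "y = (- (B *\<^sub>v t)) @\<^sub>v t" by blast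
    then show "y \<in> euclid_dual (2 * n) (gen_code (id_append n B))"
      using mem[of "- (B *\<^sub>v t)" t] B by simp
  qed
qed

section \<open>Persymmetric generator matrices\<close>

(* Reflection in the anti-diagonal, J A\<^sup>T J for the exchange matrix J; the persymmetric matrices
   are its fixed points. *)
definition anti_transpose :: "'a mat \<Rightarrow> 'a mat" where
  "anti_transpose A = mat (dim_col A) (dim_row A) (\<lambda>(i, j). A $$ (dim_row A - 1 - j, dim_col A - 1 - i))"

lemma index_anti_transpose [simp]:
  "i < dim_col A \<Longrightarrow> j < dim_row A \<Longrightarrow> anti_transpose A $$ (i, j) = A $$ (dim_row A - 1 - j, dim_col A - 1 - i)"
  "dim_row (anti_transpose A) = dim_col A" "dim_col (anti_transpose A) = dim_row A"
  by (simp_all add: anti_transpose_def)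

lemma anti_transpose_carrier_mat [simp]:
  "A \<in> carrier_mat n m \<Longrightarrow> anti_transpose A \<in> carrier_mat m n"
  by (metis carrier_matD carrier_matI index_anti_transpose(2,3))

lemma anti_transpose_mult:
  fixes A B :: "'a::comm_semiring_0 mat"
  assumes A: "A \<in> carrier_mat n m" and B: "B \<in> carrier_mat m p"
  shows "anti_transpose (A * B) = anti_transpose B * anti_transpose A"
proof (rule eq_matI)
  fix i j assume "i < dim_row (anti_transpose B * anti_transpose A)" "j < dim_col (anti_transpose B * anti_transpose A)"
  then have i: "i < p" and j: "j < n" using A B by auto
  have "anti_transpose (A * B) $$ (i, j) = (\<Sum>l<m. A $$ (n - 1 - j, l) * B $$ (l, p - 1 - i))"
    using A B i j by (simp add: scalar_prod_def atLeast0LessThan)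
  also have "\<dots> = (\<Sum>l<m. A $$ (n - 1 - j, m - 1 - l) * B $$ (m - 1 - l, p - 1 - i))"
    using sum.nat_diff_reindex[of "\<lambda>l. A $$ (n - 1 - j, l) * B $$ (l, p - 1 - i)" m] by simp
  also have "\<dots> = (\<Sum>l<m. B $$ (m - 1 - l, p - 1 - i) * A $$ (n - 1 - j, m - 1 - l))"
    by (rule sum.cong) (simp_all add: mult.commute)
  also have "\<dots> = (anti_transpose B * anti_transpose A) $$ (i, j)"
    using A B i j by (auto simp: scalar_prod_def atLeast0LessThan intro: sum.cong)
  finally show "anti_transpose (A * B) $$ (i, j) = (anti_transpose B * anti_transpose A) $$ (i, j)" .
qed (use A B in auto)

lemma anti_transpose_one [simp]: "anti_transpose (1\<^sub>m n) = 1\<^sub>m n"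
  by (rule eq_matI) auto

lemma pow_mat_Suc_left:
  assumes A: "A \<in> carrier_mat n n"
  shows "A ^\<^sub>m Suc k = A * A ^\<^sub>m k"
proof (induction k)
  case (Suc k)
  have "A ^\<^sub>m Suc (Suc k) = (A * A ^\<^sub>m k) * A" using Suc by simp
  also have "\<dots> = A * A ^\<^sub>m Suc k"
    using A by (simp add: assoc_mult_mat[of A n n "A ^\<^sub>m k" n A n])
  finally show ?case .
qed (use A in simp)

lemma anti_transpose_pow_mat:
  fixes A :: "'a::comm_semiring_1 mat"
  assumes A: "A \<in> carrier_mat n n"
  shows "anti_transpose (A ^\<^sub>m k) = anti_transpose A ^\<^sub>m k"
proof (induction k)
  case (Suc k)
  have "anti_transpose (A ^\<^sub>m Suc k) = anti_transpose (A ^\<^sub>m k) * anti_transpose A"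
    using A by (subst pow_mat_Suc_left[OF A]) (simp add: anti_transpose_mult[of A n n _ n])
  then show ?case using Suc by simp
qed (use A in simp)

lemma anti_transpose_poly_mat:
  fixes A :: "'a::comm_ring_1 mat"
  assumes A: "A \<in> carrier_mat n n"
  shows "anti_transpose (poly_mat f A) = poly_mat f (anti_transpose A)"
proof (rule eq_matI)
  fix i j assume "i < dim_row (poly_mat f (anti_transpose A))" "j < dim_col (poly_mat f (anti_transpose A))"
  then have "i < n" "j < n" using A by (simp_all add: poly_mat_def)
  moreover have "dim_row (A ^\<^sub>m k) = n" "dim_col (A ^\<^sub>m k) = n" for k
    using A by simp_all
  ultimately show "anti_transpose (poly_mat f A) $$ (i, j) = poly_mat f (anti_transpose A) $$ (i, j)"
    using A by (simp add: poly_mat_def flip: anti_transpose_pow_mat[OF A])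
qed (use A in \<open>simp_all add: poly_mat_def\<close>)

lemma anti_transpose_toeplitz:
  assumes "is_toeplitz A n"
  shows "anti_transpose A = A"
proof -
  have A: "A \<in> carrier_mat n n"
    and diagonal: "\<And>i j i' j'. i < n \<Longrightarrow> j < n \<Longrightarrow> i' < n \<Longrightarrow> j' < n \<Longrightarrow>
      int j - int i = int j' - int i' \<Longrightarrow> A $$ (i, j) = A $$ (i', j')"
    using assms unfolding is_toeplitz_def by blast+
  show ?thesis
  proof (rule eq_matI)
    fix i j assume "i < dim_row A" "j < dim_col A"
    then have i: "i < n" and j: "j < n" using A by auto
    have "int (n - 1 - i) - int (n - 1 - j) = int j - int i" using i j by linarith
    then have "A $$ (n - 1 - j, n - 1 - i) = A $$ (i, j)"
      using diagonal[of "n - 1 - j" "n - 1 - i" i j] i j by simp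
    then show "anti_transpose A $$ (i, j) = A $$ (i, j)"
      using A i j by simp
  qed (use A in auto)
qed

lemma mult_rev_vec:
  fixes A :: "'a::comm_semiring_0 mat"
  assumes A: "A \<in> carrier_mat n m" and u: "u \<in> carrier_vec m"
  shows "A *\<^sub>v rev_vec u = rev_vec ((anti_transpose A)\<^sup>T *\<^sub>v u)"
proof (rule eq_vecI)
  fix i assume "i < dim_vec (rev_vec ((anti_transpose A)\<^sup>T *\<^sub>v u))"
  then have i: "i < n" using A by simp
  have "(A *\<^sub>v rev_vec u) $ i = (\<Sum>j<m. A $$ (i, j) * u $ (m - 1 - j))"
    using A u i by (auto simp: scalar_prod_def atLeast0LessThan intro: sum.cong)
  also have "\<dots> = (\<Sum>j<m. A $$ (i, m - 1 - j) * u $ j)"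
    using sum.nat_diff_reindex[of "\<lambda>j. A $$ (i, m - 1 - j) * u $ j" m] by simp
  also have "\<dots> = rev_vec ((anti_transpose A)\<^sup>T *\<^sub>v u) $ i"
    using A u i by (auto simp: scalar_prod_def atLeast0LessThan mult.commute intro: sum.cong)
  finally show "(A *\<^sub>v rev_vec u) $ i = rev_vec ((anti_transpose A)\<^sup>T *\<^sub>v u) $ i" .
qed (use A in simp)

lemma weight_equivalent_euclid_dual_id_append:
  fixes B :: "'a::comm_ring_1 mat"
  assumes B: "B \<in> carrier_mat n n" and persymmetric: "anti_transpose B = B"
  shows "weight_equivalent (gen_code (id_append n B)) (euclid_dual (2 * n) (gen_code (id_append n B)))"
proof -
  let ?enc = "\<lambda>u. u @\<^sub>v (B\<^sup>T *\<^sub>v u)"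
  let ?dual_enc = "\<lambda>v. (- (B *\<^sub>v v)) @\<^sub>v v"
  have "rev_vec ` carrier_vec n = carrier_vec n"
    by (auto simp: image_iff) (metis rev_vec_carrier_vec_iff rev_vec_rev_vec)
  then have dual: "euclid_dual (2 * n) (gen_code (id_append n B)) = (?dual_enc \<circ> rev_vec) ` carrier_vec n"
    using euclid_dual_gen_code_id_append[OF B] by (metis image_comp)
  have "weight_equivalent (?enc ` carrier_vec n) ((?dual_enc \<circ> rev_vec) ` carrier_vec n)"
  proof (rule weight_equivalent_imageI)
    show "inj_on ?enc (carrier_vec n)"
      using B by (auto simp: inj_on_def)
    show "inj_on (?dual_enc \<circ> rev_vec) (carrier_vec n)"
    proof (rule inj_onI)
      fix x y assume "x \<in> carrier_vec n" "y \<in> carrier_vec n"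
        and "(?dual_enc \<circ> rev_vec) x = (?dual_enc \<circ> rev_vec) y"
      then have "rev_vec x = rev_vec y"
        using B append_vec_eq[of "- (B *\<^sub>v rev_vec x)" n "- (B *\<^sub>v rev_vec y)"] by simp
      then show "x = y" by (metis rev_vec_rev_vec)
    qed
    fix u :: "'a vec" assume u: "u \<in> carrier_vec n"
    have "B *\<^sub>v rev_vec u = rev_vec (B\<^sup>T *\<^sub>v u)"
      using mult_rev_vec[OF B u] persymmetric by simp
    then show "hweight ((?dual_enc \<circ> rev_vec) u) = hweight (?enc u)"
      by (simp add: hweight_append add.commute)
  qed
  then show ?thesis
    using B by (subst dual) (simp add: gen_code_id_append)
qed

lemma weight_equivalent_euclid_dual_toeplitz:
  assumes "is_toeplitz A n"
  shows "weight_equivalent (gen_code (id_append n (poly_mat f A)))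
    (euclid_dual (2 * n) (gen_code (id_append n (poly_mat f A))))"
proof (rule weight_equivalent_euclid_dual_id_append)
  have A: "A \<in> carrier_mat n n" using assms by (simp add: is_toeplitz_def)
  then show "poly_mat f A \<in> carrier_mat n n" by (rule poly_mat_carrier_mat)
  show "anti_transpose (poly_mat f A) = poly_mat f A"
    using A assms by (simp add: anti_transpose_poly_mat anti_transpose_toeplitz)
qed

section \<open>Hermitian duals\<close>

lemma finite_field_power_card:
  fixes x :: "'a::{finite,field}"
  shows "x ^ card (UNIV :: 'a set) = x"
proof -
  have "0 < card (UNIV :: 'a set)"
    by (rule finite_UNIV_card_ge_0) simp
  then have card: "card (UNIV :: 'a set) = Suc (card (UNIV :: 'a set) - 1)"
    by simp
  show ?thesis
  proof (cases "x = 0")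
    case False
    have "Units (class_ring :: 'a ring) = UNIV - {0}"
      by (simp add: class_field.field_Units)
    then have "x ^ card (UNIV - {0::'a}) = 1"
      using class_cring.units_power_order_eq_one[of x] False by simp
    then have "x ^ (card (UNIV :: 'a set) - 1) = 1"
      by (simp add: card_Diff_singleton)
    then show ?thesis
      by (subst card) simp
  qed (subst card, simp)
qed

lemma finite_field_power_sqrt_card_twice:
  fixes x :: "'a::{finite,field}"
  assumes "card (UNIV :: 'a set) = p ^ h" and "even h"
  shows "(x ^ p ^ (h div 2)) ^ p ^ (h div 2) = x"
proof -
  have "p ^ (h div 2) * p ^ (h div 2) = p ^ (h div 2 + h div 2)"
    by (simp add: power_add)
  also have "h div 2 + h div 2 = h"
    using \<open>even h\<close> by presburger
  finally have "p ^ (h div 2) * p ^ (h div 2) = card (UNIV :: 'a set)"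
    using assms(1) by simp
  then show ?thesis
    by (simp only: power_mult[symmetric] finite_field_power_card)
qed

lemma herm_dual_eq_image:
  fixes C :: "'a::field vec set"
  assumes involution: "\<And>x::'a. (x ^ r) ^ r = x"
  shows "herm_dual r N C = map_vec (\<lambda>x. x ^ r) ` euclid_dual N C"
proof -
  let ?frob = "map_vec (\<lambda>x::'a. x ^ r)"
  have frob_frob: "?frob (?frob y) = y" for y
    by (simp add: vec_eq_iff involution)
  have "(\<Sum>i<N. x $ i * ?frob y $ i) = (\<Sum>i<N. x $ i * y $ i ^ r)" if "y \<in> carrier_vec N" for x y
    using that by (intro sum.cong) auto
  then have herm: "y \<in> herm_dual r N C \<longleftrightarrow> ?frob y \<in> euclid_dual N C" for y
    by (auto simp: herm_dual_def euclid_dual_def)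
  show ?thesis
  proof (intro equalityI subsetI)
    fix y assume "y \<in> herm_dual r N C"
    then have "?frob y \<in> euclid_dual N C" using herm by blast
    then show "y \<in> ?frob ` euclid_dual N C"
      by (rule image_eqI[rotated]) (simp add: frob_frob)
  next
    fix y assume "y \<in> ?frob ` euclid_dual N C"
    then show "y \<in> herm_dual r N C"
      using herm frob_frob by auto
  qed
qed

lemma fsd_herm_if_fsd_euclid:
  fixes C :: "'a::field vec set"
  assumes fsd: "fsd_euclid N C" and involution: "\<And>x::'a. (x ^ r) ^ r = x"
  shows "fsd_herm r N C"
proof -
  have "r \<noteq> 0"
    using involution[of 0] by (metis one_neq_zero power_0)
  have "weight_equivalent (id ` euclid_dual N C) (map_vec (\<lambda>x. x ^ r) ` euclid_dual N C)"
  proof (rule weight_equivalent_imageI)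
    show "inj_on (map_vec (\<lambda>x. x ^ r)) (euclid_dual N C)"
      by (rule inj_onI) (metis (no_types) vec_eq_iff index_map_vec involution)
    have zero_iff: "x ^ r = 0 \<longleftrightarrow> x = 0" for x :: 'a
      using \<open>r \<noteq> 0\<close> by simp
    show "hweight (map_vec (\<lambda>x. x ^ r) y) = hweight (id y)" for y :: "'a vec"
      unfolding id_def by (rule hweight_map_vec[OF zero_iff])
  qed simp
  then have "weight_distribution (euclid_dual N C) = weight_distribution (herm_dual r N C)"
    unfolding herm_dual_eq_image[OF involution] image_id id_apply by (rule weight_distribution_eq_if_weight_equivalent)
  then show ?thesis
    using fsd unfolding fsd_euclid_def fsd_herm_def by simp
qed

theorem theorem4:
  fixes A1 A2 :: "'a::{finite,field} mat" and f1 f2 :: "'a poly"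
    and n d1 d2 :: nat and C1 C2 :: "'a vec set"
  assumes "n \<ge> 1"
    and "is_toeplitz A1 n" and "is_toeplitz A2 n"
    and "C1 = gen_code (id_append n (poly_mat f1 A1))"
    and "C2 = gen_code (id_append n (poly_mat f2 A2))"
    and "linear_code (2 * n) n C1" and "min_dist C1 = d1"
    and "linear_code (2 * n) n C2" and "min_dist C2 = d2"
  shows "\<exists>C :: 'a vec set. linear_code (4 * n) (2 * n) C \<and> min_dist C = min d1 d2 \<and>
           fsd_euclid (4 * n) C \<and>
           (\<forall>p h. prime p \<longrightarrow> even h \<longrightarrow> h > 0 \<longrightarrow> card (UNIV :: 'a set) = p ^ h \<longrightarrow>
              fsd_herm (p ^ (h div 2)) (4 * n) C)"
proof (intro exI conjI allI impI)
  define B1 B2 where "B1 = poly_mat f1 A1" and "B2 = poly_mat f2 A2"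
  have B: "B1 \<in> carrier_mat n n" "B2 \<in> carrier_mat n n"
    using assms(2,3) by (simp_all add: B1_def B2_def is_toeplitz_def poly_mat_carrier_mat)
  have C: "C1 = gen_code (id_append n B1)" "C2 = gen_code (id_append n B2)"
    using assms(4,5) by (simp_all add: B1_def B2_def)
  have codes: "C1 \<subseteq> carrier_vec (2 * n)" "C2 \<subseteq> carrier_vec (2 * n)"
    "0\<^sub>v (2 * n) \<in> C1" "0\<^sub>v (2 * n) \<in> C2"
    using gen_code_subset_carrier_vec[of "id_append n B1"] gen_code_subset_carrier_vec[of "id_append n B2"]
      zero_vec_mem_gen_code[of "id_append n B1"] zero_vec_mem_gen_code[of "id_append n B2"]
    by (simp_all add: C)
  have four: "4 * n = 2 * n + 2 * n" by simp
  have "linear_code (2 * n + 2 * n) (n + n) (direct_sum C1 C2)"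
    unfolding C using B id_append_carrier_mat inj_on_id_append_transpose_mult_vec
    by (intro linear_code_direct_sum_gen_code)
  then show "linear_code (4 * n) (2 * n) (direct_sum C1 C2)"
    by (simp only: four mult_2)
  have "\<exists>c\<in>C1. c \<noteq> 0\<^sub>v (2 * n)" "\<exists>c\<in>C2. c \<noteq> 0\<^sub>v (2 * n)"
    unfolding C using B assms(1) by (simp_all add: gen_code_id_append_nonzero)
  then show "min_dist (direct_sum C1 C2) = min d1 d2"
    using min_dist_direct_sum[OF codes] assms(7,9) by simp
  show fsd: "fsd_euclid (4 * n) (direct_sum C1 C2)"
    unfolding four using weight_equivalent_euclid_dual_toeplitz[OF assms(2)]
      weight_equivalent_euclid_dual_toeplitz[OF assms(3)] assms(4,5)
    by (intro fsd_euclid_direct_sum[OF codes]) simp_all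
  fix p h :: nat
  assume "even h" "card (UNIV :: 'a set) = p ^ h"
  then show "fsd_herm (p ^ (h div 2)) (4 * n) (direct_sum C1 C2)"
    using fsd by (intro fsd_herm_if_fsd_euclid finite_field_power_sqrt_card_twice)
qed

end
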